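(* Let $\pi$ be a (not necessarily unique) QSD of $(X_t)_{0\le t<\tau_\partial}$, $\lambda=\lambda(\pi)$, and assume condition (DAD) holds with set $A$, function $\psi$, constants $c_0',c_1>0$ and times $t_0,t_1>0$. Define $t_3:=t_0+t_1$ and $$c_3:=\frac{\lambda^{t_0}c_0'c_1}{\Lambda(A)\|\psi\|_\infty\|1/\psi\|_\infty\|\frac{d\pi}{d\Lambda}\|_{L^\infty(\Lambda)}}.$$ Then $\dfrac{P_{t_3}(x,\cdot)}{P_{t_3}1(x)}\ge c_3\pi(\cdot)$ for every $x\in\chi$.
   Context: $\chi$ is a metric space with Borel $\sigma$-algebra and a distinguished $\sigma$-finite Borel measure $\Lambda$ of full support. $(X_t)_{0\le t<\tau_\partial}$ is a killed Markov process on $\chi$ (discrete or continuous time), absorption time $\tau_\partial$, submarkovian semigroup $P_t(x,A)=\mathbb P_x(X_t\in A,\tau_\partial>t)$; $K1(x)=K(x,\chi)$. A QSD is $\pi\in\mathcal P(\chi)$ with $\mathbb P_\pi(X_t\in\cdot\mid\tau_\partial>t)=\pi$ for all $t$; $\lambda(\pi)=\mathbb P_\pi(\tau_\partial>1)$. $\mathcal P_\infty(\Lambda)$ = probability measures $\ll\Lambda$ with density in $L^\infty(\Lambda)$. $\mathcal B_{b,\gg}(\chi)$ = bounded Borel functions with positive infimum. (AD): there exist $\psi\in\mathcal B_{b,\gg}(\chi)$, $t_0>0$, $a>0$ and a submarkovian kernel $\tilde P$ with $\psi(x)\Lambda(dx)P_{t_0}(x,dy)=a\psi(y)\Lambda(dy)\tilde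 P(y,dx)$ on $\chi\times\chi$, $\tilde P1(y)>0$ for $\Lambda$-a.e. $y$, and $c_0'>0$, $\nu\in\mathcal P(\chi)$ not mutually singular with $\pi$ with $\tilde P(y,\cdot)/\tilde P1(y)\ge c_0'\nu$ for $\Lambda$-a.e. $y$. (DAD) Combined Dobrushin and adjoint Dobrushin condition: $\pi\in\mathcal P_\infty(\Lambda)$; there are a Borel set $A$ with $\Lambda(A)<\infty$, $\nu_1\in\mathcal P(\chi)$ with $\nu_1(\chi\setminus A)=0$, $c_1>0$, $t_1>0$ with $P_{t_1}1(x)>0$ for all $x$ and $P_{t_1}(x,\cdot)/P_{t_1}1(x)\ge c_1\nu_1$ for all $x\in\chi$ (this forces $\pi(A)>0$, hence $\Lambda(A)>0$); and (AD) holds with $\nu:=\Lambda|_A/\Lambda(A)$, some $c_0'>0$ and $t_0>0$. *)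

theory Defs
  imports "HOL-Probability.Probability"
begin

definition time_domain :: "real set \<Rightarrow> bool" where
  "time_domain T \<longleftrightarrow> T = range real \<or> T = {0..}"

definition submarkov_kernel :: "('a::topological_space \<Rightarrow> 'a measure) \<Rightarrow> bool" where
  "submarkov_kernel K \<longleftrightarrow> K \<in> borel \<rightarrow>\<^sub>M subprob_algebra borel"

text \<open>Submarkovian semigroup P t (x, A) = P_x(X_t in A, tau > t) indexed by T.\<close>
definition submarkov_semigroup :: "real set \<Rightarrow> (real \<Rightarrow> 'a::topological_space \<Rightarrow> 'a measure) \<Rightarrow> bool" where
  "submarkov_semigroup T P \<longleftrightarrow>
     (\<forall>t\<in>T. submarkov_kernel (P t)) \<and>
     (\<forall>s\<in>T. \<forall>t\<in>T. \<forall>x. \<forall>B\<in>sets borel.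
        emeasure (P (s + t) x) B = (\<integral>\<^sup>+ y. emeasure (P t y) B \<partial>(P s x)))"

text \<open>P_mu(X_t in B, tau > t) = (mu P_t)(B).\<close>
definition muP :: "'a measure \<Rightarrow> (real \<Rightarrow> 'a \<Rightarrow> 'a measure) \<Rightarrow> real \<Rightarrow> 'a set \<Rightarrow> real" where
  "muP \<mu> P t B = (\<integral> x. measure (P t x) B \<partial>\<mu>)"

definition borel_prob :: "'a::topological_space measure \<Rightarrow> bool" where
  "borel_prob \<mu> \<longleftrightarrow> prob_space \<mu> \<and> sets \<mu> = sets borel"

definition is_QSD :: "real set \<Rightarrow> (real \<Rightarrow> 'a::topological_space \<Rightarrow> 'a measure) \<Rightarrow> 'a measure \<Rightarrow> bool" where
  "is_QSD T P \<pi> \<longleftrightarrow> borel_prob \<pi> \<and>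
     (\<forall>t\<in>T. muP \<pi> P t UNIV > 0 \<and>
        (\<forall>B\<in>sets borel. muP \<pi> P t B / muP \<pi> P t UNIV = measure \<pi> B))"

definition lambda_QSD :: "(real \<Rightarrow> 'a \<Rightarrow> 'a measure) \<Rightarrow> 'a measure \<Rightarrow> real" where
  "lambda_QSD P \<pi> = muP \<pi> P 1 UNIV"

definition ref_measure :: "'a::metric_space measure \<Rightarrow> bool" where
  "ref_measure \<Lambda> \<longleftrightarrow> sets \<Lambda> = sets borel \<and> sigma_finite_measure \<Lambda> \<and>
     (\<forall>U. open U \<and> U \<noteq> {} \<longrightarrow> emeasure \<Lambda> U > 0)"

definition P_inf :: "'a::topological_space measure \<Rightarrow> 'a measure \<Rightarrow> bool" where
  "P_inf \<Lambda> \<pi> \<longleftrightarrow> borel_prob \<pi> \<and> absolutely_continuous \<Lambda> \<pi> \<and>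
     esssup \<Lambda> (RN_deriv \<Lambda> \<pi>) < \<infinity>"

definition dens_Linf :: "'a measure \<Rightarrow> 'a measure \<Rightarrow> real" where
  "dens_Linf \<Lambda> \<pi> = enn2real (esssup \<Lambda> (RN_deriv \<Lambda> \<pi>))"

definition Bb_pos :: "('a::topological_space \<Rightarrow> real) \<Rightarrow> bool" where
  "Bb_pos f \<longleftrightarrow> f \<in> borel_measurable borel \<and> bounded (range f) \<and> (INF x. f x) > 0"

definition sup_norm :: "('a \<Rightarrow> real) \<Rightarrow> real" where
  "sup_norm f = (SUP x. \<bar>f x\<bar>)"

definition mutually_singular :: "'a::topological_space measure \<Rightarrow> 'a measure \<Rightarrow> bool" where
  "mutually_singular \<mu> \<nu> \<longleftrightarrow> (\<exists>S\<in>sets borel. emeasure \<mu> S = 0 \<and> emeasure \<nu> (UNIV - S) = 0)"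

definition cond_AD ::
  "real set \<Rightarrow> (real \<Rightarrow> 'a::topological_space \<Rightarrow> 'a measure) \<Rightarrow> 'a measure \<Rightarrow> 'a measure \<Rightarrow>
   ('a \<Rightarrow> real) \<Rightarrow> real \<Rightarrow> real \<Rightarrow> ('a \<Rightarrow> 'a measure) \<Rightarrow> real \<Rightarrow> 'a measure \<Rightarrow> bool" where
  "cond_AD T P \<Lambda> \<pi> \<psi> t0 a Pt c0 \<nu> \<longleftrightarrow>
     Bb_pos \<psi> \<and> t0 \<in> T \<and> t0 > 0 \<and> a > 0 \<and> submarkov_kernel Pt \<and>
     (\<forall>D\<in>sets (borel \<Otimes>\<^sub>M borel).
        (\<integral>\<^sup>+ x. ennreal (\<psi> x) * (\<integral>\<^sup>+ y. indicator D (x, y) \<partial>(P t0 x)) \<partial>\<Lambda>)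
        = ennreal a * (\<integral>\<^sup>+ y. ennreal (\<psi> y) * (\<integral>\<^sup>+ x. indicator D (x, y) \<partial>(Pt y)) \<partial>\<Lambda>)) \<and>
     (AE y in \<Lambda>. measure (Pt y) UNIV > 0) \<and>
     c0 > 0 \<and> borel_prob \<nu> \<and> \<not> mutually_singular \<nu> \<pi> \<and>
     (AE y in \<Lambda>. \<forall>B\<in>sets borel. measure (Pt y) B / measure (Pt y) UNIV \<ge> c0 * measure \<nu> B)"

definition norm_restr :: "'a measure \<Rightarrow> 'a set \<Rightarrow> 'a measure" where
  "norm_restr \<Lambda> A = density \<Lambda> (\<lambda>x. indicator A x / emeasure \<Lambda> A)"

end

theory Submission
  imports Defs
begin

text \<open>Fix a Borel set B. On the small set A the adjoint relation turns the Doeblin minorization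
  of the adjoint kernel into a density statement: for every A' \<subseteq> A, the \<Lambda>-integral of
  \<psi> P_t0(-,B) over A' is at least c0' \<Lambda>(A')/\<Lambda>(A) times its integral over the whole space.
  By quasi-stationarity that total integral is at least
  P_\<pi>(\<tau> > t0) \<pi>(B) / (\<parallel>d\<pi>/d\<Lambda>\<parallel> \<parallel>1/\<psi>\<parallel>), with sup norms, and P_\<pi>(\<tau> > t0) \<ge> \<lambda>^t0.
  Hence P_t0(y,B) \<ge> \<kappa> \<pi>(B) for \<Lambda>-a.e. y \<in> A. The Dobrushin measure \<nu>1 lives on A and,
  being dominated by \<pi>P_t1, does not charge \<Lambda>-null sets, so the bound holds \<nu>1-a.e.;
  integrating it against P_t1(x,-) \<ge> c1 P_t1 1(x) \<nu>1 via Chapman-Kolmogorov gives the claim.\<close>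

lemma submarkov_kernelD:
  assumes "submarkov_kernel K"
  shows "sets (K x) = sets borel" "space (K x) = UNIV" "subprob_space (K x)"
proof -
  have K: "K \<in> borel \<rightarrow>\<^sub>M subprob_algebra borel" using assms by (simp add: submarkov_kernel_def)
  show "sets (K x) = sets borel" "space (K x) = UNIV" using subprob_measurableD[OF K] by auto
  show "subprob_space (K x)" using measurable_space[OF K, of x] by (auto simp: space_subprob_algebra)
qed

lemma submarkov_kernel_emeasure:
  assumes "submarkov_kernel K"
  shows "emeasure (K x) B = ennreal (measure (K x) B)" "measure (K x) B \<le> measure (K x) UNIV"
    "measure (K x) B \<le> 1"
proof -
  interpret subprob_space "K x" using submarkov_kernelD[OF assms] by auto
  show "emeasure (K x) B = ennreal (measure (K x) B)" by (simp add: emeasure_eq_measure)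
  show "measure (K x) B \<le> measure (K x) UNIV"
    using bounded_measure submarkov_kernelD(2)[OF assms] by simp
  show "measure (K x) B \<le> 1" by (simp add: subprob_measure_le_1)
qed

lemma measurable_submarkov_kernel:
  assumes "submarkov_kernel K" "B \<in> sets borel"
  shows "(\<lambda>x. measure (K x) B) \<in> borel_measurable borel"
    "(\<lambda>x. emeasure (K x) B) \<in> borel_measurable borel"
proof -
  have K: "K \<in> borel \<rightarrow>\<^sub>M subprob_algebra borel" using assms by (simp add: submarkov_kernel_def)
  show "(\<lambda>x. emeasure (K x) B) \<in> borel_measurable borel"
    using measurable_compose[OF K measurable_emeasure_subprob_algebra[OF assms(2)]] by simp
  show "(\<lambda>x. measure (K x) B) \<in> borel_measurable borel"
    using measurable_compose[OF K measurable_measure_subprob_algebra[OF assms(2)]] by simp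
qed

lemma nn_integral_submarkov_kernel:
  assumes "submarkov_kernel K" "B \<in> sets borel" "borel_prob \<mu>"
  shows "(\<integral>\<^sup>+x. emeasure (K x) B \<partial>\<mu>) = ennreal (muP \<mu> (\<lambda>_. K) t B)"
proof -
  interpret prob_space \<mu> using assms(3) by (simp add: borel_prob_def)
  have s: "sets \<mu> = sets borel" using assms(3) by (simp add: borel_prob_def)
  have m: "(\<lambda>x. measure (K x) B) \<in> borel_measurable \<mu>"
    using measurable_submarkov_kernel(1)[OF assms(1,2)] by (simp add: measurable_cong_sets[OF s refl])
  have i: "integrable \<mu> (\<lambda>x. measure (K x) B)"
    by (rule integrable_const_bound[where B=1]) (use submarkov_kernel_emeasure(3)[OF assms(1)] m in auto)
  show ?thesis
    by (simp add: muP_def submarkov_kernel_emeasure(1)[OF assms(1)] nn_integral_eq_integral[OF i])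
qed

lemma mult_le_of_le_divide:
  fixes q b m :: real
  assumes "0 \<le> m" "0 \<le> b" "q \<le> b / m"
  shows "q * m \<le> b"
proof (cases "m = 0")
  case False
  then have "0 < m" using assms(1) by simp
  then show ?thesis using assms(3) by (simp add: le_divide_eq)
qed (use assms(2) in simp)

lemma time_domain_of_nat: "time_domain T \<Longrightarrow> real n \<in> T"
  unfolding time_domain_def by auto

lemma time_domain_add: "time_domain T \<Longrightarrow> s \<in> T \<Longrightarrow> t \<in> T \<Longrightarrow> s + t \<in> T"
  unfolding time_domain_def by (auto simp flip: of_nat_add)

lemma time_domain_diff: "time_domain T \<Longrightarrow> s \<in> T \<Longrightarrow> t \<in> T \<Longrightarrow> s \<le> t \<Longrightarrow> t - s \<in> T"
  unfolding time_domain_def by (auto simp flip: of_nat_diff)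

lemma time_domain_of_nat_mult:
  assumes "time_domain T" "t \<in> T"
  shows "real n * t \<in> T"
proof (induction n)
  case 0
  then show ?case using time_domain_of_nat[OF assms(1), of 0] by simp
next
  case (Suc n)
  then show ?case using time_domain_add[OF assms(1) Suc assms(2)] by (simp add: algebra_simps)
qed

locale submarkov_process =
  fixes T :: "real set" and P :: "real \<Rightarrow> 'a::topological_space \<Rightarrow> 'a measure"
  assumes time_domain: "time_domain T" and semigroup: "submarkov_semigroup T P"
begin

lemma kernel: "t \<in> T \<Longrightarrow> submarkov_kernel (P t)"
  using semigroup by (simp add: submarkov_semigroup_def)

lemma chapman_kolmogorov:
  "s \<in> T \<Longrightarrow> t \<in> T \<Longrightarrow> B \<in> sets borel \<Longrightarrow>
    emeasure (P (s + t) x) B = (\<integral>\<^sup>+ y. emeasure (P t y) B \<partial>P s x)"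
  using semigroup by (simp add: submarkov_semigroup_def)

lemma total_mass_antimono:
  assumes "s \<in> T" "t \<in> T"
  shows "measure (P (s + t) x) UNIV \<le> measure (P s x) UNIV"
proof -
  have "ennreal (measure (P (s + t) x) UNIV) = (\<integral>\<^sup>+y. emeasure (P t y) UNIV \<partial>P s x)"
    using chapman_kolmogorov[OF assms]
    by (simp add: submarkov_kernel_emeasure[OF kernel[OF time_domain_add[OF time_domain assms]]])
  also have "\<dots> \<le> (\<integral>\<^sup>+y. 1 \<partial>P s x)"
    by (intro nn_integral_mono) (simp add: submarkov_kernel_emeasure[OF kernel[OF assms(2)]])
  also have "\<dots> = ennreal (measure (P s x) UNIV)"
    using submarkov_kernelD(2)[OF kernel[OF assms(1)]]
    by (simp add: submarkov_kernel_emeasure[OF kernel[OF assms(1)]])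
  finally show ?thesis by simp
qed

lemma normalized_kernel_ge_of_minorization:
  assumes s: "s \<in> T" and t: "t \<in> T" and pos: "0 < measure (P t x) UNIV"
    and \<nu>: "borel_prob \<nu>" and "0 \<le> c"
    and minor: "\<forall>C\<in>sets borel. measure (P t x) C / measure (P t x) UNIV \<ge> c * measure \<nu> C"
    and "0 \<le> \<kappa>" and B: "B \<in> sets borel" and ae: "AE y in \<nu>. \<kappa> \<le> measure (P s y) B"
  shows "\<kappa> * c \<le> measure (P (t + s) x) B / measure (P (t + s) x) UNIV"
proof -
  interpret \<nu>: prob_space \<nu> using \<nu> by (simp add: borel_prob_def)
  have s\<nu>: "sets \<nu> = sets borel" using \<nu> by (simp add: borel_prob_def)
  note Ks = kernel[OF s] and Kt = kernel[OF t] and Kts = kernel[OF time_domain_add[OF time_domain t s]]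
  have [measurable]: "(\<lambda>y. measure (P s y) B) \<in> borel_measurable borel"
    using measurable_submarkov_kernel(1)[OF Ks B] .
  define G where "G = {y. \<kappa> \<le> measure (P s y) B}"
  have G: "G \<in> sets borel" unfolding G_def by measurable
  have "measure \<nu> G = 1"
    using ae G s\<nu> sets_eq_imp_space_eq[OF s\<nu>] by (subst \<nu>.AE_in_set_eq_1[symmetric]) (auto simp: G_def)
  then have "c \<le> measure (P t x) G / measure (P t x) UNIV" using minor G by auto
  from mult_le_of_le_divide[OF measure_nonneg measure_nonneg this]
  have mass_G: "c * measure (P t x) UNIV \<le> measure (P t x) G" .
  have "ennreal (\<kappa> * (c * measure (P t x) UNIV)) \<le> ennreal (\<kappa> * measure (P t x) G)"
    using mass_G \<open>0 \<le> \<kappa>\<close> by (intro ennreal_leI mult_left_mono)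
  also have "\<dots> = (\<integral>\<^sup>+y. ennreal \<kappa> * indicator G y \<partial>P t x)"
    using G submarkov_kernelD(1)[OF Kt, of x] \<open>0 \<le> \<kappa>\<close>
    by (simp add: nn_integral_cmult_indicator submarkov_kernel_emeasure(1)[OF Kt] ennreal_mult)
  also have "\<dots> \<le> (\<integral>\<^sup>+y. emeasure (P s y) B \<partial>P t x)"
    by (intro nn_integral_mono) (auto simp: G_def indicator_def submarkov_kernel_emeasure(1)[OF Ks])
  also have "\<dots> = ennreal (measure (P (t + s) x) B)"
    using chapman_kolmogorov[OF t s B] by (simp add: submarkov_kernel_emeasure(1)[OF Kts])
  finally have ge: "\<kappa> * c * measure (P t x) UNIV \<le> measure (P (t + s) x) B"
    by (simp add: mult.assoc)
  show ?thesis
  proof (cases "measure (P (t + s) x) UNIV = 0")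
    case True
    then have "measure (P (t + s) x) B = 0"
      using submarkov_kernel_emeasure(2)[OF Kts, of x B] measure_nonneg[of "P (t + s) x" B] by simp
    then show ?thesis using ge pos \<open>0 \<le> \<kappa>\<close> \<open>0 \<le> c\<close> True
      by (simp add: mult_le_0_iff zero_le_mult_iff)
  next
    case False
    have "\<kappa> * c * measure (P (t + s) x) UNIV \<le> \<kappa> * c * measure (P t x) UNIV"
      using total_mass_antimono[OF t s] \<open>0 \<le> \<kappa>\<close> \<open>0 \<le> c\<close> by (intro mult_left_mono) auto
    then have "\<kappa> * c * measure (P (t + s) x) UNIV \<le> measure (P (t + s) x) B" using ge by linarith
    moreover have "0 < measure (P (t + s) x) UNIV"
      using False measure_nonneg[of "P (t + s) x" UNIV] by linarith
    ultimately show ?thesis by (simp add: le_divide_eq)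
  qed
qed

end

locale qsd = submarkov_process T P
  for T :: "real set" and P :: "real \<Rightarrow> 'a::topological_space \<Rightarrow> 'a measure" +
  fixes \<pi> :: "'a measure"
  assumes QSD: "is_QSD T P \<pi>"
begin

definition survival :: "real \<Rightarrow> real" where
  "survival t = muP \<pi> P t UNIV"

lemma borel_prob_QSD: "borel_prob \<pi>"
  using QSD by (simp add: is_QSD_def)

lemma survival_pos: "t \<in> T \<Longrightarrow> 0 < survival t"
  using QSD by (simp add: is_QSD_def survival_def)

lemma muP_eq:
  assumes "t \<in> T" "B \<in> sets borel"
  shows "muP \<pi> P t B = survival t * measure \<pi> B"
proof -
  have "muP \<pi> P t B / survival t = measure \<pi> B"
    using QSD assms unfolding is_QSD_def survival_def by blast
  then show ?thesis using survival_pos[OF assms(1)] by (simp add: divide_eq_eq mult.commute)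
qed

lemma nn_integral_kernel_eq:
  "t \<in> T \<Longrightarrow> B \<in> sets borel \<Longrightarrow>
    (\<integral>\<^sup>+x. emeasure (P t x) B \<partial>\<pi>) = ennreal (survival t * measure \<pi> B)"
  using nn_integral_submarkov_kernel[OF kernel _ borel_prob_QSD, of t B t] muP_eq[of t B]
  by (simp add: muP_def)

lemma nn_integral_kernel_UNIV:
  "t \<in> T \<Longrightarrow> (\<integral>\<^sup>+x. emeasure (P t x) UNIV \<partial>\<pi>) = ennreal (survival t)"
  using nn_integral_submarkov_kernel[OF kernel _ borel_prob_QSD, of t UNIV t]
  by (simp add: muP_def survival_def)

lemma survival_le_1:
  assumes "t \<in> T"
  shows "survival t \<le> 1"
proof -
  interpret prob_space \<pi> using borel_prob_QSD by (simp add: borel_prob_def)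
  have "ennreal (survival t) = (\<integral>\<^sup>+x. emeasure (P t x) UNIV \<partial>\<pi>)"
    using nn_integral_kernel_UNIV[OF assms] by simp
  also have "\<dots> \<le> (\<integral>\<^sup>+x. 1 \<partial>\<pi>)"
    by (intro nn_integral_mono) (simp add: submarkov_kernel_emeasure[OF kernel[OF assms]])
  finally show ?thesis by (simp add: emeasure_space_1)
qed

lemma bind_kernel_eq:
  assumes "t \<in> T"
  shows "\<pi> \<bind> P t = density \<pi> (\<lambda>_. ennreal (survival t))"
proof -
  interpret prob_space \<pi> using borel_prob_QSD by (simp add: borel_prob_def)
  have s\<pi>: "sets \<pi> = sets borel" using borel_prob_QSD by (simp add: borel_prob_def)
  have Pm: "P t \<in> \<pi> \<rightarrow>\<^sub>M subprob_algebra borel"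
    using kernel[OF assms] by (simp add: submarkov_kernel_def measurable_cong_sets[OF s\<pi> refl])
  have sb: "sets (\<pi> \<bind> P t) = sets borel"
    by (rule sets_bind) (use submarkov_kernelD[OF kernel[OF assms]] not_empty in auto)
  show ?thesis
  proof (rule measure_eqI)
    show "sets (\<pi> \<bind> P t) = sets (density \<pi> (\<lambda>_. ennreal (survival t)))"
      using sb s\<pi> by simp
    fix B assume "B \<in> sets (\<pi> \<bind> P t)"
    then have B: "B \<in> sets borel" using sb by simp
    have "emeasure (\<pi> \<bind> P t) B = (\<integral>\<^sup>+x. emeasure (P t x) B \<partial>\<pi>)"
      by (rule emeasure_bind[OF _ Pm B]) (use not_empty in auto)
    also have "\<dots> = ennreal (survival t) * emeasure \<pi> B"
      using nn_integral_kernel_eq[OF assms B] survival_pos[OF assms]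
      by (simp add: emeasure_eq_measure ennreal_mult)
    also have "\<dots> = emeasure (density \<pi> (\<lambda>_. ennreal (survival t))) B"
      using B s\<pi> by (simp add: emeasure_density nn_integral_cmult_indicator)
    finally show "emeasure (\<pi> \<bind> P t) B = emeasure (density \<pi> (\<lambda>_. ennreal (survival t))) B" .
  qed
qed

lemma nn_integral_nn_integral_kernel:
  assumes "t \<in> T" "g \<in> borel_measurable borel"
  shows "(\<integral>\<^sup>+x. \<integral>\<^sup>+y. g y \<partial>P t x \<partial>\<pi>) = ennreal (survival t) * (\<integral>\<^sup>+y. g y \<partial>\<pi>)"
proof -
  have s\<pi>: "sets \<pi> = sets borel" using borel_prob_QSD by (simp add: borel_prob_def)
  have Pm: "P t \<in> \<pi> \<rightarrow>\<^sub>M subprob_algebra borel"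
    using kernel[OF assms(1)] by (simp add: submarkov_kernel_def measurable_cong_sets[OF s\<pi> refl])
  have g: "g \<in> borel_measurable \<pi>" using assms(2) by (simp add: measurable_cong_sets[OF s\<pi> refl])
  have "(\<integral>\<^sup>+x. \<integral>\<^sup>+y. g y \<partial>P t x \<partial>\<pi>) = (\<integral>\<^sup>+y. g y \<partial>(\<pi> \<bind> P t))"
    by (rule nn_integral_bind[OF assms(2) Pm, symmetric])
  also have "\<dots> = (\<integral>\<^sup>+y. ennreal (survival t) * g y \<partial>\<pi>)"
    unfolding bind_kernel_eq[OF assms(1)] using g by (simp add: nn_integral_density)
  also have "\<dots> = ennreal (survival t) * (\<integral>\<^sup>+y. g y \<partial>\<pi>)"
    using g by (simp add: nn_integral_cmult)
  finally show ?thesis .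
qed

lemma survival_add:
  assumes s: "s \<in> T" and t: "t \<in> T"
  shows "survival (s + t) = survival s * survival t"
proof -
  have st: "s + t \<in> T" using time_domain_add[OF time_domain s t] .
  have "ennreal (survival (s + t)) = (\<integral>\<^sup>+x. emeasure (P (s + t) x) UNIV \<partial>\<pi>)"
    using nn_integral_kernel_UNIV[OF st] by simp
  also have "\<dots> = (\<integral>\<^sup>+x. \<integral>\<^sup>+y. emeasure (P t y) UNIV \<partial>P s x \<partial>\<pi>)"
    using chapman_kolmogorov[OF s t] by simp
  also have "\<dots> = ennreal (survival s) * ennreal (survival t)"
    using nn_integral_nn_integral_kernel[OF s measurable_submarkov_kernel(2)[OF kernel[OF t]]]
      nn_integral_kernel_UNIV[OF t] by simp
  finally show ?thesis
    using survival_pos[OF s] survival_pos[OF t] survival_pos[OF st] by (simp flip: ennreal_mult)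
qed

lemma survival_antimono:
  assumes "s \<in> T" "t \<in> T" "s \<le> t"
  shows "survival t \<le> survival s"
proof -
  have d: "t - s \<in> T" using time_domain_diff[OF time_domain assms] .
  have "survival t = survival s * survival (t - s)" using survival_add[OF assms(1) d] by simp
  also have "\<dots> \<le> survival s"
    using survival_le_1[OF d] survival_pos[OF assms(1)] by (simp add: mult_left_le)
  finally show ?thesis .
qed

lemma survival_of_nat_mult:
  assumes "t \<in> T"
  shows "survival (real n * t) = survival t ^ n"
proof (induction n)
  case 0
  have "survival 0 = survival 0 * survival 0"
    using survival_add[of 0 0] time_domain_of_nat[OF time_domain, of 0] by simp
  then show ?case using survival_pos[of 0] time_domain_of_nat[OF time_domain, of 0] by simp
next
  case (Suc n)
  have "survival (real (Suc n) * t) = survival (real n * t) * survival t"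
    using survival_add[OF time_domain_of_nat_mult[OF time_domain assms] assms]
    by (simp add: algebra_simps)
  then show ?case using Suc by simp
qed

text \<open>A non-integer time t can only be compared with integer times through its multiples:
  \<open>survival t ^ n \<ge> survival \<lceil>n t\<rceil> \<ge> survival 1 ^ (n t + 1)\<close> for all n, and n \<rightarrow> \<infinity>.\<close>
lemma lambda_powr_le_survival:
  assumes t: "t \<in> T" and "0 < t"
  shows "survival 1 powr t \<le> survival t"
proof -
  have one: "1 \<in> T" using time_domain_of_nat[OF time_domain, of 1] by simp
  define l where "l = survival 1"
  have l0: "0 < l" and l1: "l \<le> 1" using survival_pos[OF one] survival_le_1[OF one] by (auto simp: l_def)
  have lt0: "0 < l powr t" using l0 by simp
  define q where "q = survival t / l powr t"
  have key: "l \<le> q ^ Suc n" for n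
  proof -
    define x where "x = real (Suc n) * t"
    have xT: "x \<in> T" unfolding x_def using time_domain_of_nat_mult[OF time_domain t] .
    have "0 < x" using \<open>0 < t\<close> by (simp add: x_def)
    define k where "k = nat \<lceil>x\<rceil>"
    have kx: "x \<le> real k" "real k \<le> x + 1" using \<open>0 < x\<close> by (auto simp: k_def)
    have "(l powr t) ^ Suc n * l = l powr (x + 1)"
      using l0 by (simp add: powr_add x_def powr_powr[symmetric] powr_realpow mult.commute)
    also have "\<dots> \<le> l powr real k" using powr_mono'[OF kx(2)] l0 l1 by simp
    also have "\<dots> = survival (real k * 1)"
      using survival_of_nat_mult[OF one, of k] powr_realpow[OF l0, of k] by (simp add: l_def)
    also have "\<dots> \<le> survival x"
      using survival_antimono[OF xT time_domain_of_nat[OF time_domain, of k] kx(1)] by simp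
    also have "\<dots> = (l powr t) ^ Suc n * q ^ Suc n"
      using survival_of_nat_mult[OF t, of "Suc n"] lt0 by (simp add: x_def q_def power_divide)
    finally show ?thesis using lt0 by simp
  qed
  have "1 \<le> q"
  proof (rule ccontr)
    assume "\<not> 1 \<le> q"
    then obtain n where n: "q ^ n < l" using real_arch_pow_inv[OF l0] by force
    show False
    proof (cases n)
      case 0
      then show False using n l1 by simp
    next
      case (Suc m)
      then show False using n key[of m] by simp
    qed
  qed
  then show ?thesis using lt0 by (simp add: q_def l_def le_divide_eq)
qed

lemma minorizing_measure_null:
  assumes t: "t \<in> T" and "0 < c" and \<nu>: "borel_prob \<nu>"
    and minor: "\<forall>x. \<forall>B\<in>sets borel. measure (P t x) B / measure (P t x) UNIV \<ge> c * measure \<nu> B"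
    and N: "N \<in> sets borel" "measure \<pi> N = 0"
  shows "emeasure \<nu> N = 0"
proof -
  interpret \<nu>: prob_space \<nu> using \<nu> by (simp add: borel_prob_def)
  have s\<pi>: "sets \<pi> = sets borel" using borel_prob_QSD by (simp add: borel_prob_def)
  have "ennreal (c * measure \<nu> N) * ennreal (survival t)
      = (\<integral>\<^sup>+x. ennreal (c * measure \<nu> N) * emeasure (P t x) UNIV \<partial>\<pi>)"
    using nn_integral_kernel_UNIV[OF t] measurable_submarkov_kernel(2)[OF kernel[OF t], of UNIV]
    by (simp add: nn_integral_cmult measurable_cong_sets[OF s\<pi> refl])
  also have "\<dots> \<le> (\<integral>\<^sup>+x. emeasure (P t x) N \<partial>\<pi>)"
  proof (intro nn_integral_mono)
    fix x
    have "c * measure \<nu> N \<le> measure (P t x) N / measure (P t x) UNIV" using minor N(1) by blast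
    from mult_le_of_le_divide[OF measure_nonneg measure_nonneg this]
    show "ennreal (c * measure \<nu> N) * emeasure (P t x) UNIV \<le> emeasure (P t x) N"
      using \<open>0 < c\<close>
      by (simp add: submarkov_kernel_emeasure(1)[OF kernel[OF t]] ennreal_leI flip: ennreal_mult)
  qed
  also have "\<dots> = 0" using nn_integral_kernel_eq[OF t N(1)] N(2) by simp
  finally have "c * measure \<nu> N * survival t = 0"
    using \<open>0 < c\<close> survival_pos[OF t] by (simp flip: ennreal_mult)
  then show ?thesis using \<open>0 < c\<close> survival_pos[OF t] by (simp add: \<nu>.emeasure_eq_measure)
qed

lemma AE_minorizing_measure:
  assumes s\<Lambda>: "sets \<Lambda> = sets borel" and ac: "absolutely_continuous \<Lambda> \<pi>"
    and t: "t \<in> T" and "0 < c" and \<nu>: "borel_prob \<nu>"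
    and minor: "\<forall>x. \<forall>B\<in>sets borel. measure (P t x) B / measure (P t x) UNIV \<ge> c * measure \<nu> B"
    and A: "A \<in> sets borel" "emeasure \<nu> (UNIV - A) = 0" and ae: "AE y in \<Lambda>. y \<in> A \<longrightarrow> Q y"
  shows "AE y in \<nu>. Q y"
proof -
  from ae obtain N where N: "{y \<in> space \<Lambda>. \<not> (y \<in> A \<longrightarrow> Q y)} \<subseteq> N" "N \<in> null_sets \<Lambda>"
    using ae by (auto simp: eventually_ae_filter)
  have "N \<in> null_sets \<pi>" using ac N(2) by (auto simp: absolutely_continuous_def)
  then have "N \<in> sets borel" "measure \<pi> N = 0"
    using borel_prob_QSD by (auto simp: borel_prob_def measure_def)
  then have "emeasure \<nu> N = 0" by (rule minorizing_measure_null[OF t \<open>0 < c\<close> \<nu> minor])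
  moreover have "sets \<nu> = sets borel" using \<nu> by (simp add: borel_prob_def)
  ultimately have "N \<union> (UNIV - A) \<in> null_sets \<nu>"
    using A \<open>N \<in> sets borel\<close> by (intro null_sets.Un null_setsI) auto
  moreover have "{y \<in> space \<nu>. \<not> Q y} \<subseteq> N \<union> (UNIV - A)"
    using N(1) sets_eq_imp_space_eq[OF s\<Lambda>] by auto
  ultimately show ?thesis by (rule AE_I')
qed

end

lemma AE_ge_of_set_nn_integral_ge:
  fixes f :: "'a \<Rightarrow> ennreal"
  assumes f[measurable]: "f \<in> borel_measurable M" and A[measurable]: "A \<in> sets M"
    and finite: "(\<integral>\<^sup>+x. f x * indicator A x \<partial>M) \<noteq> \<infinity>"
    and ge: "\<And>A'. A' \<in> sets M \<Longrightarrow> A' \<subseteq> A \<Longrightarrow> c * emeasure M A' \<le> (\<integral>\<^sup>+x. f x * indicator A' x \<partial>M)"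
  shows "AE x in M. x \<in> A \<longrightarrow> c \<le> f x"
proof -
  define E where "E = {x \<in> space M. x \<in> A \<and> f x < c}"
  have E[measurable]: "E \<in> sets M" unfolding E_def by measurable
  have "E \<subseteq> A" unfolding E_def by auto
  then have "(\<integral>\<^sup>+x. f x * indicator E x \<partial>M) \<le> (\<integral>\<^sup>+x. f x * indicator A x \<partial>M)"
    by (intro nn_integral_mono) (auto split: split_indicator)
  then have finite_E: "(\<integral>\<^sup>+x. f x * indicator E x \<partial>M) \<noteq> \<infinity>" using finite by (auto simp: top_unique)
  have "AE x in M. c * indicator E x \<le> f x * indicator E x"
  proof (rule ccontr)
    assume "\<not> (AE x in M. c * indicator E x \<le> f x * indicator E x)"
    then have "(\<integral>\<^sup>+x. f x * indicator E x \<partial>M) < (\<integral>\<^sup>+x. c * indicator E x \<partial>M)"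
      by (intro nn_integral_less[OF _ _ finite_E])
        (auto simp: E_def split: split_indicator intro: less_imp_le)
    then show False using ge[OF E \<open>E \<subseteq> A\<close>] by (simp add: nn_integral_cmult_indicator)
  qed
  then show ?thesis
    by (rule AE_mp) (auto simp: E_def split: split_indicator intro!: AE_I2)
qed

lemma Bb_pos_bounds:
  assumes "Bb_pos \<psi>"
  shows "0 < \<psi> x" "\<psi> x \<le> sup_norm \<psi>" "1 / \<psi> x \<le> sup_norm (\<lambda>x. 1 / \<psi> x)"
    and "0 < sup_norm \<psi>" "0 < sup_norm (\<lambda>x. 1 / \<psi> x)"
proof -
  have bounded: "bounded (range \<psi>)" using assms by (simp add: Bb_pos_def)
  then have "bdd_below (range \<psi>)" by (rule bounded_imp_bdd_below)
  then have inf_le: "(INF x. \<psi> x) \<le> \<psi> y" for y by (rule cINF_lower) simp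
  have inf_pos: "0 < (INF x. \<psi> x)" using assms by (simp add: Bb_pos_def)
  show pos: "0 < \<psi> x" for x using inf_le[of x] inf_pos by simp
  have "bdd_above (range (\<lambda>x. \<bar>\<psi> x\<bar>))"
    using bdd_above_norm[of "range \<psi>"] bounded by (simp add: image_comp o_def)
  then show le: "\<psi> x \<le> sup_norm \<psi>" for x
    unfolding sup_norm_def by (rule cSUP_upper2[OF _ UNIV_I[of x]]) simp
  have "\<bar>1 / \<psi> y\<bar> \<le> 1 / (INF x. \<psi> x)" for y
    using pos[of y] inf_le[of y] inf_pos by (simp add: frac_le)
  then have "bdd_above (range (\<lambda>x. \<bar>1 / \<psi> x\<bar>))" by (intro bdd_aboveI) auto
  then show inv_le: "1 / \<psi> x \<le> sup_norm (\<lambda>x. 1 / \<psi> x)" for x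
    unfolding sup_norm_def by (rule cSUP_upper2[OF _ UNIV_I[of x]]) (use pos[of x] in simp)
  show "0 < sup_norm \<psi>" using pos le by (rule less_le_trans)
  show "0 < sup_norm (\<lambda>x. 1 / \<psi> x)"
    using divide_pos_pos[OF zero_less_one pos] inv_le by (rule less_le_trans)
qed

lemma weighted_kernel_le_sup_norm:
  assumes "Bb_pos \<psi>" "submarkov_kernel K"
  shows "ennreal (\<psi> x) * emeasure (K x) B \<le> ennreal (sup_norm \<psi>)"
proof -
  have "\<psi> x * measure (K x) B \<le> sup_norm \<psi> * 1"
    using Bb_pos_bounds(1,2)[OF assms(1), of x] submarkov_kernel_emeasure(3)[OF assms(2)]
    by (intro mult_mono) auto
  then show ?thesis
    using Bb_pos_bounds(1)[OF assms(1), of x]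
    by (simp add: submarkov_kernel_emeasure(1)[OF assms(2)] ennreal_leI flip: ennreal_mult)
qed

lemma measure_norm_restr:
  assumes "A \<in> sets \<Lambda>" "emeasure \<Lambda> A < \<infinity>" "0 < measure \<Lambda> A" "A' \<in> sets \<Lambda>" "A' \<subseteq> A"
  shows "measure (norm_restr \<Lambda> A) A' = measure \<Lambda> A' / measure \<Lambda> A"
proof -
  have "emeasure \<Lambda> A' \<le> emeasure \<Lambda> A" using assms by (intro emeasure_mono) auto
  then have fin: "emeasure \<Lambda> A' < \<infinity>" using assms(2) by simp
  have "emeasure (norm_restr \<Lambda> A) A' = (\<integral>\<^sup>+x. indicator A x / emeasure \<Lambda> A * indicator A' x \<partial>\<Lambda>)"
    unfolding norm_restr_def using assms(1,4) by (intro emeasure_density) auto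
  also have "\<dots> = (\<integral>\<^sup>+x. indicator A' x / emeasure \<Lambda> A \<partial>\<Lambda>)"
    using assms(5) by (intro nn_integral_cong) (auto simp: indicator_def)
  also have "\<dots> = emeasure \<Lambda> A' / emeasure \<Lambda> A"
    using assms(4) by (subst nn_integral_divide) auto
  also have "\<dots> = ennreal (measure \<Lambda> A' / measure \<Lambda> A)"
    using fin assms(2,3) by (simp add: emeasure_eq_ennreal_measure divide_ennreal)
  finally show ?thesis by (simp add: measure_def)
qed

lemma nn_integral_le_dens_Linf:
  assumes "ref_measure \<Lambda>" "P_inf \<Lambda> \<pi>" "f \<in> borel_measurable borel"
  shows "(\<integral>\<^sup>+x. f x \<partial>\<pi>) \<le> ennreal (dens_Linf \<Lambda> \<pi>) * (\<integral>\<^sup>+x. f x \<partial>\<Lambda>)"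
proof -
  have s\<Lambda>: "sets \<Lambda> = sets borel" and "sigma_finite_measure \<Lambda>"
    using assms(1) by (auto simp: ref_measure_def)
  have ac: "absolutely_continuous \<Lambda> \<pi>" and s\<pi>: "sets \<pi> = sets borel"
    and ess: "esssup \<Lambda> (RN_deriv \<Lambda> \<pi>) < \<infinity>"
    using assms(2) by (auto simp: P_inf_def borel_prob_def)
  have f: "f \<in> borel_measurable \<Lambda>" using assms(3) by (simp add: measurable_cong_sets[OF s\<Lambda> refl])
  have "AE x in \<Lambda>. RN_deriv \<Lambda> \<pi> x \<le> ennreal (dens_Linf \<Lambda> \<pi>)"
    using esssup_AE[of "RN_deriv \<Lambda> \<pi>" \<Lambda>] ess by (simp add: dens_Linf_def ennreal_enn2real less_top)
  have "(\<integral>\<^sup>+x. f x \<partial>\<pi>) = (\<integral>\<^sup>+x. RN_deriv \<Lambda> \<pi> x * f x \<partial>\<Lambda>)"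
    by (rule sigma_finite_measure.RN_deriv_nn_integral[OF \<open>sigma_finite_measure \<Lambda>\<close> ac _ f])
      (simp add: s\<pi> s\<Lambda>)
  also have "\<dots> \<le> (\<integral>\<^sup>+x. ennreal (dens_Linf \<Lambda> \<pi>) * f x \<partial>\<Lambda>)"
    using \<open>AE x in \<Lambda>. RN_deriv \<Lambda> \<pi> x \<le> _\<close>
    by (intro nn_integral_mono_AE) (auto elim!: eventually_mono intro: mult_right_mono)
  also have "\<dots> = ennreal (dens_Linf \<Lambda> \<pi>) * (\<integral>\<^sup>+x. f x \<partial>\<Lambda>)"
    using f by (rule nn_integral_cmult)
  finally show ?thesis .
qed

lemma cond_AD_rectangle:
  assumes AD: "cond_AD T P \<Lambda> \<pi> \<psi> t0 a Pt c0 \<nu>" and K: "submarkov_kernel (P t0)"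
    and A': "A' \<in> sets borel" and B: "B \<in> sets borel"
  shows "(\<integral>\<^sup>+x. ennreal (\<psi> x) * (indicator A' x * emeasure (P t0 x) B) \<partial>\<Lambda>)
       = ennreal a * (\<integral>\<^sup>+y. ennreal (\<psi> y) * (indicator B y * emeasure (Pt y) A') \<partial>\<Lambda>)"
proof -
  have Kt: "submarkov_kernel Pt"
    and adjoint: "\<And>D. D \<in> sets (borel \<Otimes>\<^sub>M borel) \<Longrightarrow>
      (\<integral>\<^sup>+ x. ennreal (\<psi> x) * (\<integral>\<^sup>+ y. indicator D (x, y) \<partial>(P t0 x)) \<partial>\<Lambda>)
      = ennreal a * (\<integral>\<^sup>+ y. ennreal (\<psi> y) * (\<integral>\<^sup>+ x. indicator D (x, y) \<partial>(Pt y)) \<partial>\<Lambda>)"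
    using AD by (auto simp: cond_AD_def)
  have e1: "(\<integral>\<^sup>+ y. indicator (A' \<times> B) (x, y) \<partial>P t0 x) = indicator A' x * emeasure (P t0 x) B" for x
  proof -
    have "(\<integral>\<^sup>+ y. indicator (A' \<times> B) (x, y) \<partial>P t0 x) = (\<integral>\<^sup>+ y. indicator A' x * indicator B y \<partial>P t0 x)"
      by (intro nn_integral_cong) (simp add: indicator_def)
    then show ?thesis using B submarkov_kernelD(1)[OF K, of x] by (simp add: nn_integral_cmult_indicator)
  qed
  have e2: "(\<integral>\<^sup>+ x. indicator (A' \<times> B) (x, y) \<partial>Pt y) = indicator B y * emeasure (Pt y) A'" for y
  proof -
    have "(\<integral>\<^sup>+ x. indicator (A' \<times> B) (x, y) \<partial>Pt y) = (\<integral>\<^sup>+ x. indicator B y * indicator A' x \<partial>Pt y)"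
      by (intro nn_integral_cong) (auto simp: indicator_def)
    then show ?thesis using A' submarkov_kernelD(1)[OF Kt, of y] by (simp add: nn_integral_cmult_indicator)
  qed
  have "A' \<times> B \<in> sets (borel \<Otimes>\<^sub>M borel)" using A' B by simp
  from adjoint[OF this] show ?thesis unfolding e1 e2 .
qed

lemma cond_AD_set_lower_bound:
  assumes AD: "cond_AD T P \<Lambda> \<pi> \<psi> t0 a Pt c0 (norm_restr \<Lambda> A)" and "ref_measure \<Lambda>"
    and K: "submarkov_kernel (P t0)"
    and A: "A \<in> sets borel" "emeasure \<Lambda> A < \<infinity>" "0 < measure \<Lambda> A"
    and A': "A' \<in> sets borel" "A' \<subseteq> A" and B: "B \<in> sets borel"
  shows "ennreal (c0 * measure \<Lambda> A' / measure \<Lambda> A) * (\<integral>\<^sup>+x. ennreal (\<psi> x) * emeasure (P t0 x) B \<partial>\<Lambda>)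
      \<le> (\<integral>\<^sup>+x. ennreal (\<psi> x) * (indicator A' x * emeasure (P t0 x) B) \<partial>\<Lambda>)"
proof -
  define q where "q = c0 * measure \<Lambda> A' / measure \<Lambda> A"
  have Kt: "submarkov_kernel Pt" and "0 < a" "0 < c0"
    and doeblin: "AE y in \<Lambda>. \<forall>C\<in>sets borel.
      measure (Pt y) C / measure (Pt y) UNIV \<ge> c0 * measure (norm_restr \<Lambda> A) C"
    using AD by (auto simp: cond_AD_def)
  have s\<Lambda>: "sets \<Lambda> = sets borel" using assms(2) by (simp add: ref_measure_def)
  have "0 \<le> q" using \<open>0 < c0\<close> by (simp add: q_def)
  have \<nu>A': "measure (norm_restr \<Lambda> A) A' = measure \<Lambda> A' / measure \<Lambda> A"
    using A A' s\<Lambda> by (intro measure_norm_restr) auto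
  from doeblin have "AE y in \<Lambda>. q * measure (Pt y) UNIV \<le> measure (Pt y) A'"
  proof eventually_elim
    case (elim y)
    then have "c0 * (measure \<Lambda> A' / measure \<Lambda> A) \<le> measure (Pt y) A' / measure (Pt y) UNIV"
      using A'(1) \<nu>A' by auto
    from mult_le_of_le_divide[OF _ _ this] show ?case by (simp add: q_def)
  qed
  define F where "F = (\<lambda>y. ennreal (\<psi> y) * (indicator B y * emeasure (Pt y) UNIV))"
  define G where "G = (\<lambda>y. ennreal (\<psi> y) * (indicator B y * emeasure (Pt y) A'))"
  have "AE y in \<Lambda>. ennreal q * F y \<le> G y"
    using \<open>AE y in \<Lambda>. q * measure (Pt y) UNIV \<le> measure (Pt y) A'\<close>
    by eventually_elim
      (auto simp: F_def G_def submarkov_kernel_emeasure(1)[OF Kt] \<open>0 \<le> q\<close> indicator_def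
        mult.left_commute[of "ennreal q"] simp flip: ennreal_mult intro!: mult_left_mono)
  moreover have "F \<in> borel_measurable \<Lambda>"
  proof -
    have [measurable]: "\<psi> \<in> borel_measurable borel" using AD by (simp add: cond_AD_def Bb_pos_def)
    have [measurable]: "(\<lambda>y. emeasure (Pt y) UNIV) \<in> borel_measurable borel"
      using measurable_submarkov_kernel(2)[OF Kt] by simp
    have "F \<in> borel_measurable borel" unfolding F_def using B by measurable
    then show ?thesis by (simp add: measurable_cong_sets[OF s\<Lambda> refl])
  qed
  ultimately have "ennreal q * integral\<^sup>N \<Lambda> F \<le> integral\<^sup>N \<Lambda> G"
    by (simp add: nn_integral_cmult[symmetric] nn_integral_mono_AE)
  then have "ennreal q * (ennreal a * integral\<^sup>N \<Lambda> F) \<le> ennreal a * integral\<^sup>N \<Lambda> G"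
    by (simp add: mult.left_commute[of "ennreal q"] mult_left_mono)
  then show ?thesis
    using cond_AD_rectangle[OF AD K _ B, of UNIV] cond_AD_rectangle[OF AD K A'(1) B]
    by (simp add: q_def F_def G_def)
qed

lemma cond_AD_AE_lower_bound:
  assumes AD: "cond_AD T P \<Lambda> \<pi> \<psi> t0 a Pt c0 (norm_restr \<Lambda> A)" and \<Lambda>: "ref_measure \<Lambda>"
    and K: "submarkov_kernel (P t0)"
    and A: "A \<in> sets borel" "emeasure \<Lambda> A < \<infinity>" "0 < measure \<Lambda> A" and B: "B \<in> sets borel"
  shows "AE y in \<Lambda>. y \<in> A \<longrightarrow>
    ennreal (c0 / measure \<Lambda> A) * (\<integral>\<^sup>+x. ennreal (\<psi> x) * emeasure (P t0 x) B \<partial>\<Lambda>)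
      \<le> ennreal (\<psi> y) * emeasure (P t0 y) B"
proof -
  define f where "f = (\<lambda>x. ennreal (\<psi> x) * emeasure (P t0 x) B)"
  have s\<Lambda>: "sets \<Lambda> = sets borel" using \<Lambda> by (simp add: ref_measure_def)
  have \<psi>: "Bb_pos \<psi>" using AD by (simp add: cond_AD_def)
  have "f \<in> borel_measurable borel"
  proof -
    have [measurable]: "\<psi> \<in> borel_measurable borel" using \<psi> by (simp add: Bb_pos_def)
    have [measurable]: "(\<lambda>y. emeasure (P t0 y) B) \<in> borel_measurable borel"
      using measurable_submarkov_kernel(2)[OF K B] .
    show ?thesis unfolding f_def by measurable
  qed
  then have f: "f \<in> borel_measurable \<Lambda>" by (simp add: measurable_cong_sets[OF s\<Lambda> refl])
  have "(\<integral>\<^sup>+x. f x * indicator A x \<partial>\<Lambda>) \<le> (\<integral>\<^sup>+x. ennreal (sup_norm \<psi>) * indicator A x \<partial>\<Lambda>)"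
    using weighted_kernel_le_sup_norm[OF \<psi> K]
    by (intro nn_integral_mono) (simp add: f_def indicator_def)
  also have "\<dots> < \<infinity>" using A s\<Lambda> by (simp add: nn_integral_cmult_indicator ennreal_mult_less_top)
  finally have finite: "(\<integral>\<^sup>+x. f x * indicator A x \<partial>\<Lambda>) \<noteq> \<infinity>" by simp
  have "ennreal (c0 / measure \<Lambda> A) * integral\<^sup>N \<Lambda> f * emeasure \<Lambda> A'
      \<le> (\<integral>\<^sup>+x. f x * indicator A' x \<partial>\<Lambda>)" if "A' \<in> sets \<Lambda>" "A' \<subseteq> A" for A'
  proof -
    have "emeasure \<Lambda> A' \<le> emeasure \<Lambda> A" using that by (intro emeasure_mono) (use A s\<Lambda> in auto)
    then have "emeasure \<Lambda> A' = ennreal (measure \<Lambda> A')"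
      using A(2) by (intro emeasure_eq_ennreal_measure) (auto simp: top_unique)
    moreover have "0 \<le> c0" using AD by (simp add: cond_AD_def)
    ultimately have "ennreal (c0 / measure \<Lambda> A) * integral\<^sup>N \<Lambda> f * emeasure \<Lambda> A'
        = ennreal (c0 * measure \<Lambda> A' / measure \<Lambda> A) * integral\<^sup>N \<Lambda> f"
      by (simp add: ac_simps flip: ennreal_mult)
    also have "\<dots> \<le> (\<integral>\<^sup>+x. f x * indicator A' x \<partial>\<Lambda>)"
      using cond_AD_set_lower_bound[OF AD \<Lambda> K A _ that(2) B] that(1) s\<Lambda>
      by (simp add: f_def ac_simps)
    finally show ?thesis .
  qed
  from AE_ge_of_set_nn_integral_ge[OF f _ finite this] A s\<Lambda> show ?thesis by (simp add: f_def)
qed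

lemma survival_mult_le_weighted_integral:
  fixes P :: "real \<Rightarrow> 'a::metric_space \<Rightarrow> 'a measure"
  assumes "qsd T P \<pi>" and \<Lambda>: "ref_measure \<Lambda>" and \<pi>: "P_inf \<Lambda> \<pi>" and \<psi>: "Bb_pos \<psi>"
    and t: "t \<in> T" and B: "B \<in> sets borel"
  shows "ennreal (qsd.survival P \<pi> t * measure \<pi> B)
    \<le> ennreal (dens_Linf \<Lambda> \<pi> * sup_norm (\<lambda>x. 1 / \<psi> x))
      * (\<integral>\<^sup>+x. ennreal (\<psi> x) * emeasure (P t x) B \<partial>\<Lambda>)"
proof -
  interpret qsd T P \<pi> by fact
  define Q where "Q = sup_norm (\<lambda>x. 1 / \<psi> x)"
  note K = kernel[OF t]
  have "0 < Q" unfolding Q_def by (rule Bb_pos_bounds(5)[OF \<psi>])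
  have "ennreal (survival t * measure \<pi> B) = (\<integral>\<^sup>+x. emeasure (P t x) B \<partial>\<pi>)"
    using nn_integral_kernel_eq[OF t B] ..
  also have "\<dots> \<le> ennreal (dens_Linf \<Lambda> \<pi>) * (\<integral>\<^sup>+x. emeasure (P t x) B \<partial>\<Lambda>)"
    by (rule nn_integral_le_dens_Linf[OF \<Lambda> \<pi> measurable_submarkov_kernel(2)[OF K B]])
  also have "(\<integral>\<^sup>+x. emeasure (P t x) B \<partial>\<Lambda>)
      \<le> (\<integral>\<^sup>+x. ennreal Q * (ennreal (\<psi> x) * emeasure (P t x) B) \<partial>\<Lambda>)"
  proof (intro nn_integral_mono)
    fix x
    have "1 \<le> Q * \<psi> x" using Bb_pos_bounds(1,3)[OF \<psi>, of x] by (simp add: Q_def divide_le_eq)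
    then have "ennreal 1 \<le> ennreal (Q * \<psi> x)" by (rule ennreal_leI)
    then have "1 \<le> ennreal Q * ennreal (\<psi> x)"
      using \<open>0 < Q\<close> Bb_pos_bounds(1)[OF \<psi>, of x] by (simp add: ennreal_mult)
    then show "emeasure (P t x) B \<le> ennreal Q * (ennreal (\<psi> x) * emeasure (P t x) B)"
      using mult_right_mono[of 1 "ennreal Q * ennreal (\<psi> x)" "emeasure (P t x) B"]
      by (simp add: ac_simps)
  qed
  also have "\<dots> = ennreal Q * (\<integral>\<^sup>+x. ennreal (\<psi> x) * emeasure (P t x) B \<partial>\<Lambda>)"
  proof (rule nn_integral_cmult)
    have [measurable]: "\<psi> \<in> borel_measurable borel" using \<psi> by (simp add: Bb_pos_def)
    have [measurable]: "(\<lambda>y. emeasure (P t y) B) \<in> borel_measurable borel"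
      using measurable_submarkov_kernel(2)[OF K B] .
    have s\<Lambda>: "sets \<Lambda> = sets borel" using \<Lambda> by (simp add: ref_measure_def)
    show "(\<lambda>x. ennreal (\<psi> x) * emeasure (P t x) B) \<in> borel_measurable \<Lambda>"
      unfolding measurable_cong_sets[OF s\<Lambda> refl] by measurable
  qed
  finally have "ennreal (survival t * measure \<pi> B)
      \<le> ennreal (dens_Linf \<Lambda> \<pi>) * (ennreal Q * (\<integral>\<^sup>+x. ennreal (\<psi> x) * emeasure (P t x) B \<partial>\<Lambda>))"
    by (simp add: mult_left_mono)
  moreover have "ennreal (dens_Linf \<Lambda> \<pi> * Q) = ennreal (dens_Linf \<Lambda> \<pi>) * ennreal Q"
    using \<open>0 < Q\<close> by (simp add: dens_Linf_def ennreal_mult)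
  ultimately show ?thesis by (simp add: Q_def mult.assoc)
qed

lemma AE_QSD_kernel_ge_on_set:
  fixes P :: "real \<Rightarrow> 'a::metric_space \<Rightarrow> 'a measure"
  assumes "qsd T P \<pi>" and \<Lambda>: "ref_measure \<Lambda>" and \<pi>: "P_inf \<Lambda> \<pi>"
    and A: "A \<in> sets borel" "emeasure \<Lambda> A < \<infinity>"
    and AD: "cond_AD T P \<Lambda> \<pi> \<psi> t0 a Pt c0 (norm_restr \<Lambda> A)" and B: "B \<in> sets borel"
  shows "AE y in \<Lambda>. y \<in> A \<longrightarrow>
    qsd.survival P \<pi> t0 * c0
      / (measure \<Lambda> A * sup_norm \<psi> * sup_norm (\<lambda>x. 1 / \<psi> x) * dens_Linf \<Lambda> \<pi>)
      * measure \<pi> B \<le> measure (P t0 y) B"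
proof (cases "measure \<Lambda> A = 0 \<or> dens_Linf \<Lambda> \<pi> = 0")
  case True
  then show ?thesis by auto
next
  case False
  interpret qsd T P \<pi> by fact
  define H where "H = dens_Linf \<Lambda> \<pi>"
  define Q where "Q = sup_norm (\<lambda>x. 1 / \<psi> x)"
  define I where "I = (\<integral>\<^sup>+x. ennreal (\<psi> x) * emeasure (P t0 x) B \<partial>\<Lambda>)"
  have t0: "t0 \<in> T" and \<psi>: "Bb_pos \<psi>" and "0 < c0" using AD by (auto simp: cond_AD_def)
  note K = kernel[OF t0]
  have "0 < measure \<Lambda> A" "0 < H"
    using False by (auto simp: H_def dens_Linf_def less_le)
  have "0 < Q" unfolding Q_def by (rule Bb_pos_bounds(5)[OF \<psi>])
  have "ennreal (H * Q) * ennreal (survival t0 * measure \<pi> B / (H * Q))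
      = ennreal (survival t0 * measure \<pi> B)"
    using \<open>0 < H\<close> \<open>0 < Q\<close> survival_pos[OF t0] by (simp flip: ennreal_mult)
  also have "\<dots> \<le> ennreal (H * Q) * I"
    unfolding H_def Q_def I_def
    by (rule survival_mult_le_weighted_integral[OF \<open>qsd T P \<pi>\<close> \<Lambda> \<pi> \<psi> t0 B])
  finally have I_ge: "ennreal (survival t0 * measure \<pi> B / (H * Q)) \<le> I"
    using \<open>0 < H\<close> \<open>0 < Q\<close> by (simp add: ennreal_mult_le_mult_iff)
  show ?thesis
    using cond_AD_AE_lower_bound[OF AD \<Lambda> K A \<open>0 < measure \<Lambda> A\<close> B]
  proof eventually_elim
    case (elim y)
    show ?case
    proof
      assume "y \<in> A"
      define r where "r = c0 / measure \<Lambda> A * (survival t0 * measure \<pi> B / (H * Q))"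
      have "0 \<le> r" using \<open>0 < c0\<close> \<open>0 < measure \<Lambda> A\<close> \<open>0 < H\<close> \<open>0 < Q\<close> survival_pos[OF t0]
        by (simp add: r_def)
      have "ennreal r = ennreal (c0 / measure \<Lambda> A) * ennreal (survival t0 * measure \<pi> B / (H * Q))"
        unfolding r_def using \<open>0 < c0\<close> \<open>0 < measure \<Lambda> A\<close> \<open>0 < H\<close> \<open>0 < Q\<close> survival_pos[OF t0]
        by (intro ennreal_mult) auto
      also have "\<dots> \<le> ennreal (c0 / measure \<Lambda> A) * I"
        using I_ge by (rule mult_left_mono) simp
      also have "\<dots> \<le> ennreal (\<psi> y * measure (P t0 y) B)"
        using elim \<open>y \<in> A\<close> Bb_pos_bounds(1)[OF \<psi>, of y]
        by (simp add: I_def submarkov_kernel_emeasure(1)[OF K] ennreal_mult)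
      finally have "r \<le> \<psi> y * measure (P t0 y) B"
        using Bb_pos_bounds(1)[OF \<psi>, of y] by (subst (asm) ennreal_le_iff) auto
      have "r / sup_norm \<psi> \<le> r / \<psi> y"
        using Bb_pos_bounds(1,2)[OF \<psi>, of y] \<open>0 \<le> r\<close> by (intro divide_left_mono) auto
      also have "\<dots> \<le> measure (P t0 y) B"
        using \<open>r \<le> \<psi> y * measure (P t0 y) B\<close> Bb_pos_bounds(1)[OF \<psi>, of y]
        by (simp add: divide_le_eq mult.commute)
      finally have "r / sup_norm \<psi> \<le> measure (P t0 y) B" .
      then show "survival t0 * c0 / (measure \<Lambda> A * sup_norm \<psi> * sup_norm (\<lambda>x. 1 / \<psi> x)
          * dens_Linf \<Lambda> \<pi>) * measure \<pi> B \<le> measure (P t0 y) B"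
        by (simp add: r_def Q_def H_def field_simps)
    qed
  qed
qed

theorem mainTheorem10:
  fixes T :: "real set"
    and P :: "real \<Rightarrow> 'a::metric_space \<Rightarrow> 'a measure"
    and \<Lambda> \<pi> \<nu>1 :: "'a measure"
    and A :: "'a set"
    and \<psi> :: "'a \<Rightarrow> real"
    and Pt :: "'a \<Rightarrow> 'a measure"
    and t0 t1 a c0' c1 :: real
  assumes "time_domain T"
    and "submarkov_semigroup T P"
    and "ref_measure \<Lambda>"
    and "is_QSD T P \<pi>"
    \<comment> \<open>(DAD)\<close>
    and "P_inf \<Lambda> \<pi>"
    and "A \<in> sets borel" and "emeasure \<Lambda> A < \<infinity>"
    and "borel_prob \<nu>1" and "emeasure \<nu>1 (UNIV - A) = 0"
    and "c1 > 0" and "t1 \<in> T" and "t1 > 0"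
    and "\<forall>x. measure (P t1 x) UNIV > 0"
    and "\<forall>x. \<forall>B\<in>sets borel. measure (P t1 x) B / measure (P t1 x) UNIV \<ge> c1 * measure \<nu>1 B"
    and "cond_AD T P \<Lambda> \<pi> \<psi> t0 a Pt c0' (norm_restr \<Lambda> A)"
  shows "\<forall>x. \<forall>B\<in>sets borel.
           measure (P (t0 + t1) x) B / measure (P (t0 + t1) x) UNIV
             \<ge> (lambda_QSD P \<pi> powr t0 * c0' * c1
                 / (measure \<Lambda> A * sup_norm \<psi> * sup_norm (\<lambda>x. 1 / \<psi> x) * dens_Linf \<Lambda> \<pi>))
               * measure \<pi> B"
proof (intro allI ballI)
  fix x and B :: "'a set"
  assume B: "B \<in> sets borel"
  interpret qsd T P \<pi> using assms(1,2,4) by unfold_locales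
  have t0: "t0 \<in> T" "0 < t0" and "0 < c0'" and \<psi>: "Bb_pos \<psi>"
    using assms(15) by (auto simp: cond_AD_def)
  define D where "D = measure \<Lambda> A * sup_norm \<psi> * sup_norm (\<lambda>x. 1 / \<psi> x) * dens_Linf \<Lambda> \<pi>"
  define \<kappa> where "\<kappa> = lambda_QSD P \<pi> powr t0 * c0' / D * measure \<pi> B"
  have "0 \<le> D"
    using Bb_pos_bounds(4,5)[OF \<psi>] unfolding D_def dens_Linf_def by (intro mult_nonneg_nonneg) auto
  have "lambda_QSD P \<pi> powr t0 \<le> survival t0"
    using lambda_powr_le_survival[OF t0] by (simp add: lambda_QSD_def survival_def)
  then have \<kappa>_le: "\<kappa> \<le> survival t0 * c0' / D * measure \<pi> B"
    using \<open>0 < c0'\<close> \<open>0 \<le> D\<close> by (simp add: \<kappa>_def divide_right_mono mult_right_mono)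
  have "AE y in \<Lambda>. y \<in> A \<longrightarrow> \<kappa> \<le> measure (P t0 y) B"
    using AE_QSD_kernel_ge_on_set[OF qsd_axioms assms(3,5,6,7,15) B]
    by eventually_elim (use \<kappa>_le[unfolded D_def] in \<open>blast intro: order_trans\<close>)
  moreover have "sets \<Lambda> = sets borel" using assms(3) by (simp add: ref_measure_def)
  moreover have "absolutely_continuous \<Lambda> \<pi>" using assms(5) by (simp add: P_inf_def)
  ultimately have "AE y in \<nu>1. \<kappa> \<le> measure (P t0 y) B"
    by (intro AE_minorizing_measure[OF _ _ assms(11,10,8,14,6,9)])
  moreover have "0 \<le> \<kappa>" using \<open>0 < c0'\<close> \<open>0 \<le> D\<close> by (simp add: \<kappa>_def)
  ultimately have "\<kappa> * c1 \<le> measure (P (t1 + t0) x) B / measure (P (t1 + t0) x) UNIV"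
    using assms(8,10,11,13,14) B
    by (intro normalized_kernel_ge_of_minorization[OF t0(1) assms(11)]) auto
  then show "lambda_QSD P \<pi> powr t0 * c0' * c1 / D * measure \<pi> B
      \<le> measure (P (t0 + t1) x) B / measure (P (t0 + t1) x) UNIV"
    by (simp add: \<kappa>_def add.commute mult_ac)
qed

end
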